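(* Let $N^h\ge 2$ be an integer, $h=1/N^h$, and let $\eta_K,\eta_M,\alpha$ be real parameters. Let $\mathbf{K}_s=\mathbf{K}-\eta_K\mathbf{S}$ and $\mathbf{M}_{gsq}=\alpha\mathbf{M}_G+(1-\alpha)\mathbf{M}_L+\eta_M\mathbf{S}_g$ be the $(N^h-1)\times(N^h-1)$ matrices described in the context. Then the generalized matrix eigenvalue problem $\mathbf{K}_{s}\mathbf{U}_{gsq}=\lambda^h_{gsq}\mathbf{M}_{gsq}\mathbf{U}_{gsq}$ has, for every $j\in\{1,\dots,N^h-1\}$, the eigenpair $(\lambda^h_{gsq,j},\mathbf{U}_{gsq,j})$ given by \[ \lambda_{gsq,j}^h=\frac{12}{h^2}\,\frac{\big(1-2\eta_K+2\eta_K\cos(t_j)\big)\sin^2(t_j/2)}{3+18\eta_M-\alpha+(\alpha-24\eta_M)\cos(t_j)+6\eta_M\cos(2t_j)},\qquad \mathbf{U}_{gsq,j,k}=c_j\sin(k t_j),\quad k=1,\dots,N^h-1, \] where $t_j:=j\pi h$, $\mathbf{U}_{gsq,j,k}$ is the $k$-th component of $\mathbf{U}_{gsq,j}$, and $c_j>0$ is a normalization constant.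
   Context: Setting (linear finite elements, generalized SoftFEM with blended quadrature, in 1D): Let $x_k=kh$, $k=0,\dots,N^h$, be a uniform mesh of $[0,1]$. Let $V^h$ be the space of continuous functions on $[0,1]$ that are affine on each $[x_{k-1},x_k]$ and vanish at $0$ and $1$, with hat basis $\phi_k$, $k=1,\dots,N^h-1$, $\phi_k(x_l)=\delta_{kl}$. For $v\in V^h$ and an interior node $x_k$ let $[\![v']\!](x_k)=v'(x_k^-)-v'(x_k^+)$. Define $a(v,w)=\int_0^1 v'w'\,dx$, $s(v,w)=\sum_{k=1}^{N^h-1} h\,[\![v']\!](x_k)[\![w']\!](x_k)$, $s_g(v,w)=\sum_{k=1}^{N^h-1} h^3\,[\![v']\!](x_k)[\![w']\!](x_k)$, $\mathbf{K}_{kl}=a(\phi_l,\phi_k)$, $\mathbf{S}_{kl}=s(\phi_l,\phi_k)$, $(\mathbf{S}_g)_{kl}=s_g(\phi_l,\phi_k)$. $\mathbf{M}_G$ is the mass matrix $\int_0^1\phi_l\phi_k\,dx$ computed elementwise by the 2-point Gauss–Legendre rule, and $\mathbf{M}_L$ the one computed by the 2-point Gauss–Lobatto (trapezoidal) rule. Explicitly, $\mathbf{K}=\frac1h\,\mathrm{tridiag}(-1,2,-1)$, $\mathbf{M}_G=h\,\mathrm{tridiag}(\tfrac16,\tfrac23,\tfrac16)$, $\mathbf{M}_L=h\,\mathbf{I}$, $\mathbf{S}=\frac1h$ times the symmetric pentadiagonal matrix with rows $(1,-4,6,-4,1)$ except that the first and last diagonal entries are $5$, and $\mathbf{S}_g=h^2\mathbf{S}$;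 all are $(N^h-1)\times(N^h-1)$. *)

theory Defs
  imports Complex_Main
begin

text \<open>Matrices are represented as functions nat => nat => real, indexed by
  k, l in {1..N-1}; vectors as nat => real indexed by {1..N-1}.
  Throughout, N stands for N^h and h = 1 / N.\<close>

definition meshsize :: "nat \<Rightarrow> real" where
  "meshsize N = 1 / real N"

text \<open>Jump of the derivative of the hat function phi_l at the interior node x_m:
  phi_l'(x_m^-) - phi_l'(x_m^+).\<close>
definition hat_jump :: "nat \<Rightarrow> nat \<Rightarrow> nat \<Rightarrow> real" where
  "hat_jump N l m = (1 / meshsize N) *
     (if m = l then 2 else if m = l + 1 \<or> l = m + 1 then -1 else 0)"

definition stiffK :: "nat \<Rightarrow> nat \<Rightarrow> nat \<Rightarrow> real" where
  "stiffK N k l = (1 / meshsize N) *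
     (if k = l then 2 else if k = l + 1 \<or> l = k + 1 then -1 else 0)"

definition massG :: "nat \<Rightarrow> nat \<Rightarrow> nat \<Rightarrow> real" where
  "massG N k l = meshsize N *
     (if k = l then 2/3 else if k = l + 1 \<or> l = k + 1 then 1/6 else 0)"

definition massL :: "nat \<Rightarrow> nat \<Rightarrow> nat \<Rightarrow> real" where
  "massL N k l = meshsize N * (if k = l then 1 else 0)"

text \<open>S_{kl} = s(phi_l, phi_k) = sum over interior nodes of h [phi_l'] [phi_k'].\<close>
definition stabS :: "nat \<Rightarrow> nat \<Rightarrow> nat \<Rightarrow> real" where
  "stabS N k l = (\<Sum>m = 1..N - 1. meshsize N * hat_jump N l m * hat_jump N k m)"

definition stabSg :: "nat \<Rightarrow> nat \<Rightarrow> nat \<Rightarrow> real" where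
  "stabSg N k l = (\<Sum>m = 1..N - 1. meshsize N ^ 3 * hat_jump N l m * hat_jump N k m)"

definition matKs :: "real \<Rightarrow> nat \<Rightarrow> nat \<Rightarrow> nat \<Rightarrow> real" where
  "matKs etaK N k l = stiffK N k l - etaK * stabS N k l"

definition matMgsq :: "real \<Rightarrow> real \<Rightarrow> nat \<Rightarrow> nat \<Rightarrow> nat \<Rightarrow> real" where
  "matMgsq alpha etaM N k l =
     alpha * massG N k l + (1 - alpha) * massL N k l + etaM * stabSg N k l"

definition matvec :: "nat \<Rightarrow> (nat \<Rightarrow> nat \<Rightarrow> real) \<Rightarrow> (nat \<Rightarrow> real) \<Rightarrow> nat \<Rightarrow> real" where
  "matvec N A u k = (\<Sum>l = 1..N - 1. A k l * u l)"

end

theory Submission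
  imports Defs
begin

text \<open>With \<open>T(a, b)\<close> the symmetric tridiagonal Toeplitz matrix with diagonal \<open>a\<close> and
  off-diagonal \<open>b\<close>, we have \<open>K = T(2,-1)/h\<close>, \<open>M\<^sub>G = h T(2/3,1/6)\<close>, \<open>M\<^sub>L = h T(1,0)\<close>, and, since
  the derivative jumps of the hat functions are the columns of \<open>T(2,-1)/h\<close>,
  \<open>S = T(2,-1)\<^sup>2/h\<close> and \<open>S\<^sub>g = h T(2,-1)\<^sup>2\<close>. Every \<open>T(a, b)\<close> has the sine vector
  \<open>sin (k t\<^sub>j)\<close> as eigenvector with eigenvalue \<open>a + 2 b cos t\<^sub>j\<close>: this is the identity
  \<open>sin ((k-1) t) + sin ((k+1) t) = 2 cos t sin (k t)\<close>, and the truncation to interior nodes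
  is harmless because \<open>sin (k t\<^sub>j)\<close> vanishes at \<open>k = 0\<close> and \<open>k = N\<close>. So \<open>K\<^sub>s\<close> and \<open>M\<^sub>g\<^sub>s\<^sub>q\<close> act on
  \<open>U\<^sub>j\<close> as scalars, and \<open>\<lambda>\<close> is their quotient.\<close>

definition tridiag :: "real \<Rightarrow> real \<Rightarrow> nat \<Rightarrow> nat \<Rightarrow> real" where
  "tridiag a b k l = (if k = l then a else if k = l + 1 \<or> l = k + 1 then b else 0)"

definition matmul :: "nat \<Rightarrow> (nat \<Rightarrow> nat \<Rightarrow> real) \<Rightarrow> (nat \<Rightarrow> nat \<Rightarrow> real) \<Rightarrow> nat \<Rightarrow> nat \<Rightarrow> real" where
  "matmul N A B k l = (\<Sum>m = 1..N - 1. A k m * B m l)"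

definition dirichlet_mode :: "nat \<Rightarrow> real \<Rightarrow> (nat \<Rightarrow> real) \<Rightarrow> bool" where
  "dirichlet_mode N co u \<longleftrightarrow>
     u 0 = 0 \<and> u N = 0 \<and> (\<forall>m \<ge> 1. u (m - 1) + u (m + 1) = 2 * co * u m)"

lemma tridiag_sym: "tridiag a b k l = tridiag a b l k"
  unfolding tridiag_def by auto

lemma matvec_add:
  "matvec N (\<lambda>k l. A k l + B k l) u k = matvec N A u k + matvec N B u k"
  by (simp add: matvec_def sum.distrib distrib_right)

lemma matvec_diff:
  "matvec N (\<lambda>k l. A k l - B k l) u k = matvec N A u k - matvec N B u k"
  by (simp add: matvec_def sum_subtractf left_diff_distrib)

lemma matvec_scale:
  "matvec N (\<lambda>k l. c * A k l) u k = c * matvec N A u k"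
  by (simp add: matvec_def sum_distrib_left mult.assoc)

lemma matvec_scale_vector:
  "matvec N A (\<lambda>l. c * u l) k = c * matvec N A u k"
  by (simp add: matvec_def sum_distrib_left mult.left_commute)

lemma matvec_matmul:
  "matvec N (matmul N A B) u k = matvec N A (matvec N B u) k"
proof -
  have "matvec N (matmul N A B) u k = (\<Sum>l = 1..N - 1. \<Sum>m = 1..N - 1. A k m * (B m l * u l))"
    by (simp add: matvec_def matmul_def sum_distrib_right mult.assoc)
  also have "\<dots> = (\<Sum>m = 1..N - 1. \<Sum>l = 1..N - 1. A k m * (B m l * u l))"
    by (rule sum.swap)
  also have "\<dots> = matvec N A (matvec N B u) k"
    by (simp add: matvec_def sum_distrib_left)
  finally show ?thesis .
qed

lemma matvec_cong:
  assumes "\<And>l. l \<in> {1..N - 1} \<Longrightarrow> u l = v l"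
  shows "matvec N A u k = matvec N A v k"
  unfolding matvec_def using assms by (intro sum.cong) auto

lemma dirichlet_mode_sine:
  assumes "sin (real N * t) = 0"
  shows "dirichlet_mode N (cos t) (\<lambda>k. c * sin (real k * t))"
  unfolding dirichlet_mode_def
proof (intro conjI allI impI)
  fix m :: nat
  assume "1 \<le> m"
  then have "real (m - 1) * t = real m * t - t"
    by (simp add: of_nat_diff algebra_simps)
  moreover have "real (m + 1) * t = real m * t + t"
    by (simp add: algebra_simps)
  ultimately show "c * sin (real (m - 1) * t) + c * sin (real (m + 1) * t)
      = 2 * cos t * (c * sin (real m * t))"
    by (simp only:) (simp add: sin_diff sin_add algebra_simps)
qed (use assms in simp_all)

lemma matvec_tridiag:
  assumes u: "dirichlet_mode N co u" and k: "k \<in> {1..N - 1}"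
  shows "matvec N (tridiag a b) u k = (a + 2 * b * co) * u k"
proof -
  have "tridiag a b k l * u l = (if l = k then a * u k else 0) + (if l = k + 1 then b * u (k + 1) else 0)
      + (if l = k - 1 then b * u (k - 1) else 0)" for l
    using k by (auto simp: tridiag_def)
  then have "matvec N (tridiag a b) u k
      = a * u k + (if k + 1 \<le> N - 1 then b * u (k + 1) else 0) + (if 1 \<le> k - 1 then b * u (k - 1) else 0)"
    using k by (simp add: matvec_def sum.distrib) auto
  also have "\<dots> = a * u k + b * (u (k - 1) + u (k + 1))"
  proof -
    \<comment> \<open>the neighbours cut off by the truncation are the boundary nodes \<open>0\<close> and \<open>N\<close>\<close>
    have "\<not> k + 1 \<le> N - 1 \<Longrightarrow> k + 1 = N" "\<not> 1 \<le> k - 1 \<Longrightarrow> k - 1 = 0"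
      using k by auto
    then show ?thesis
      using u by (auto simp: dirichlet_mode_def algebra_simps)
  qed
  also have "\<dots> = (a + 2 * b * co) * u k"
    using u k by (simp add: dirichlet_mode_def algebra_simps)
  finally show ?thesis .
qed

lemma matvec_tridiag_square:
  assumes u: "dirichlet_mode N co u" and k: "k \<in> {1..N - 1}"
  shows "matvec N (matmul N (tridiag a b) (tridiag a b)) u k = (a + 2 * b * co)^2 * u k"
proof -
  have "matvec N (tridiag a b) (matvec N (tridiag a b) u) k
      = matvec N (tridiag a b) (\<lambda>l. (a + 2 * b * co) * u l) k"
    by (rule matvec_cong) (simp add: matvec_tridiag[OF u])
  also have "\<dots> = (a + 2 * b * co)^2 * u k"
    by (simp add: matvec_scale_vector matvec_tridiag[OF u k] power2_eq_square)
  finally show ?thesis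
    by (simp add: matvec_matmul)
qed

lemma hat_jump_eq: "hat_jump N l m = tridiag 2 (-1) l m / meshsize N"
  by (simp add: hat_jump_def tridiag_def)

lemma stiffK_eq: "stiffK N = (\<lambda>k l. tridiag 2 (-1) k l / meshsize N)"
  by (simp add: fun_eq_iff stiffK_def tridiag_def)

lemma massG_eq: "massG N = (\<lambda>k l. meshsize N * tridiag (2/3) (1/6) k l)"
  by (simp add: fun_eq_iff massG_def tridiag_def)

lemma massL_eq: "massL N = (\<lambda>k l. meshsize N * tridiag 1 0 k l)"
  by (simp add: fun_eq_iff massL_def tridiag_def)

lemma stabS_eq: "stabS N = (\<lambda>k l. matmul N (tridiag 2 (-1)) (tridiag 2 (-1)) k l / meshsize N)"
  unfolding fun_eq_iff stabS_def matmul_def hat_jump_eq sum_divide_distrib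
proof (intro allI sum.cong refl)
  fix k l m
  show "meshsize N * (tridiag 2 (-1) l m / meshsize N) * (tridiag 2 (-1) k m / meshsize N)
      = tridiag 2 (-1) k m * tridiag 2 (-1) m l / meshsize N"
    by (cases "meshsize N = 0") (simp_all add: tridiag_sym[of _ _ l m])
qed

lemma stabSg_eq: "stabSg N = (\<lambda>k l. meshsize N * matmul N (tridiag 2 (-1)) (tridiag 2 (-1)) k l)"
  unfolding fun_eq_iff stabSg_def matmul_def hat_jump_eq sum_distrib_left
proof (intro allI sum.cong refl)
  fix k l m
  show "meshsize N ^ 3 * (tridiag 2 (-1) l m / meshsize N) * (tridiag 2 (-1) k m / meshsize N)
      = meshsize N * (tridiag 2 (-1) k m * tridiag 2 (-1) m l)"
    by (cases "meshsize N = 0") (simp_all add: tridiag_sym[of _ _ l m] power3_eq_cube)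
qed

lemma matvec_matKs:
  assumes "dirichlet_mode N co u" and "k \<in> {1..N - 1}"
  shows "matvec N (matKs etaK N) u k
    = (2 - 2 * co) * (1 - 2 * etaK + 2 * etaK * co) / meshsize N * u k" (is "?lhs = ?rhs")
proof -
  have Ks: "matKs etaK N = (\<lambda>k l. (1 / meshsize N) *
      (tridiag 2 (-1) k l - etaK * matmul N (tridiag 2 (-1)) (tridiag 2 (-1)) k l))"
    by (simp add: fun_eq_iff matKs_def stiffK_eq stabS_eq diff_divide_distrib)
  have "?lhs = (1 / meshsize N) * (matvec N (tridiag 2 (-1)) u k
      - etaK * matvec N (matmul N (tridiag 2 (-1)) (tridiag 2 (-1))) u k)"
    by (simp only: Ks matvec_scale matvec_diff)
  also have "\<dots> = ?rhs"
    unfolding matvec_tridiag[OF assms] matvec_tridiag_square[OF assms]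
    by (simp add: power2_eq_square add_divide_distrib diff_divide_distrib algebra_simps)
  finally show ?thesis .
qed

lemma matvec_matMgsq:
  assumes "dirichlet_mode N co u" and "k \<in> {1..N - 1}"
  shows "matvec N (matMgsq alpha etaM N) u k
    = meshsize N * (3 + 12 * etaM - alpha + (alpha - 24 * etaM) * co + 12 * etaM * co^2) / 3 * u k"
    (is "?lhs = ?rhs")
proof -
  have Mgsq: "matMgsq alpha etaM N = (\<lambda>k l. meshsize N * (alpha * tridiag (2/3) (1/6) k l
      + (1 - alpha) * tridiag 1 0 k l + etaM * matmul N (tridiag 2 (-1)) (tridiag 2 (-1)) k l))"
    by (simp add: fun_eq_iff matMgsq_def massG_eq massL_eq stabSg_eq algebra_simps)
  have "?lhs = meshsize N * (alpha * matvec N (tridiag (2/3) (1/6)) u k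
      + (1 - alpha) * matvec N (tridiag 1 0) u k
      + etaM * matvec N (matmul N (tridiag 2 (-1)) (tridiag 2 (-1))) u k)"
    by (simp only: Mgsq matvec_scale matvec_add)
  also have "\<dots> = ?rhs"
    unfolding matvec_tridiag[OF assms] matvec_tridiag_square[OF assms]
    by (simp add: power2_eq_square algebra_simps)
  finally show ?thesis .
qed

theorem lemma3:
  fixes N j :: nat and etaK etaM alpha c :: real
  assumes "N \<ge> 2"
    and "1 \<le> j" and "j \<le> N - 1"
    and "c > 0"
    and "3 + 18 * etaM - alpha + (alpha - 24 * etaM) * cos (real j * pi * meshsize N)
           + 6 * etaM * cos (2 * (real j * pi * meshsize N)) \<noteq> 0"
  shows "let h = meshsize N; t = real j * pi * h;
             lam = 12 / h^2 * ((1 - 2 * etaK + 2 * etaK * cos t) * (sin (t / 2))^2)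
                   / (3 + 18 * etaM - alpha + (alpha - 24 * etaM) * cos t + 6 * etaM * cos (2 * t));
             U = (\<lambda>k. c * sin (real k * t))
         in \<forall>k \<in> {1..N - 1}.
              matvec N (matKs etaK N) U k = lam * matvec N (matMgsq alpha etaM N) U k"
proof -
  define h where "h = meshsize N"
  define t where "t = real j * pi * h"
  define U where "U = (\<lambda>k::nat. c * sin (real k * t))"
  define D where "D = 3 + 18 * etaM - alpha + (alpha - 24 * etaM) * cos t + 6 * etaM * cos (2 * t)"
  have h_pos: "h > 0"
    using assms(1) by (simp add: h_def meshsize_def)
  have D_nonzero: "D \<noteq> 0"
    using assms(5) by (simp add: D_def t_def h_def)
  have "real N * t = real j * pi"
    using assms(1) by (simp add: t_def h_def meshsize_def)
  then have mode: "dirichlet_mode N (cos t) U"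
    unfolding U_def by (intro dirichlet_mode_sine) simp
  have half_angle: "(sin (t / 2))^2 = (1 - cos t) / 2"
    using cos_double_sin[of "t / 2"] by simp
  have D_eq: "D = 3 + 12 * etaM - alpha + (alpha - 24 * etaM) * cos t + 12 * etaM * (cos t)^2"
    unfolding D_def cos_double_cos by (simp add: algebra_simps)
  have "matvec N (matKs etaK N) U k
      = 12 / h^2 * ((1 - 2 * etaK + 2 * etaK * cos t) * (sin (t / 2))^2) / D
        * matvec N (matMgsq alpha etaM N) U k" if "k \<in> {1..N - 1}" for k
    unfolding matvec_matKs[OF mode that] matvec_matMgsq[OF mode that] h_def[symmetric]
      D_eq[symmetric] half_angle
    using h_pos D_nonzero by (simp add: field_simps power2_eq_square)
  then show ?thesis
    unfolding Let_def h_def[symmetric] t_def[symmetric] U_def[symmetric] D_def[symmetric] by blast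
qed

end
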